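(* Let $\langle B,\wedge,{}'\rangle$ be an algebra with $\wedge$ binary and ${}'$ unary satisfying $x\wedge(y\wedge z)\approx y\wedge(z\wedge x)$ and $x\approx (x'\wedge y)'\wedge(x'\wedge y')'$. Then $x\wedge y=y\wedge x$ for all $x,y\in B$. *)

theory Defs
  imports Main
begin

end

theory Submission
  imports Defs
begin

text \<open>
  The second axiom is only used to see that every element is a product.
  The cyclic law alone already makes every product \<open>u \<cdot> v\<close> commute with every
  product of two products \<open>(p \<cdot> q) \<cdot> (s \<cdot> t)\<close>; since every element is of the
  latter form, all elements commute.
\<close>

locale cyclic_magma =
  fixes mult :: "'a \<Rightarrow> 'a \<Rightarrow> 'a" (infix "\<cdot>" 70)
  assumes cyclic: "x \<cdot> (y \<cdot> z) = y \<cdot> (z \<cdot> x)"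
begin

lemma rotate: "x \<cdot> (y \<cdot> z) = z \<cdot> (x \<cdot> y)"
  by (rule trans [OF cyclic cyclic])

lemma product_commutes_with_product_of_products:
  "(u \<cdot> v) \<cdot> ((p \<cdot> q) \<cdot> (s \<cdot> t)) = ((p \<cdot> q) \<cdot> (s \<cdot> t)) \<cdot> (u \<cdot> v)"
proof -
  have "(u \<cdot> v) \<cdot> ((p \<cdot> q) \<cdot> (s \<cdot> t)) = (s \<cdot> t) \<cdot> ((u \<cdot> v) \<cdot> (p \<cdot> q))"
    by (rule rotate)
  also have "\<dots> = (s \<cdot> t) \<cdot> (p \<cdot> (q \<cdot> (u \<cdot> v)))"
    by (simp only: cyclic[of "u \<cdot> v" p q])
  also have "\<dots> = (s \<cdot> t) \<cdot> (p \<cdot> (u \<cdot> (v \<cdot> q)))"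
    by (simp only: cyclic[of q u v])
  also have "\<dots> = (s \<cdot> t) \<cdot> ((v \<cdot> q) \<cdot> (p \<cdot> u))"
    by (simp only: rotate[of p u "v \<cdot> q"])
  also have "\<dots> = (v \<cdot> q) \<cdot> ((p \<cdot> u) \<cdot> (s \<cdot> t))"
    by (rule cyclic)
  also have "\<dots> = (v \<cdot> q) \<cdot> (s \<cdot> (t \<cdot> (p \<cdot> u)))"
    by (simp only: cyclic[of "p \<cdot> u" s t])
  also have "\<dots> = (v \<cdot> q) \<cdot> (s \<cdot> (u \<cdot> (t \<cdot> p)))"
    by (simp only: rotate[of t p u])
  also have "\<dots> = (v \<cdot> q) \<cdot> (u \<cdot> ((t \<cdot> p) \<cdot> s))"
    by (simp only: cyclic[of s u "t \<cdot> p"])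
  also have "\<dots> = u \<cdot> (((t \<cdot> p) \<cdot> s) \<cdot> (v \<cdot> q))"
    by (rule cyclic)
  also have "\<dots> = u \<cdot> (v \<cdot> (q \<cdot> ((t \<cdot> p) \<cdot> s)))"
    by (simp only: cyclic[of "(t \<cdot> p) \<cdot> s" v q])
  also have "\<dots> = (q \<cdot> ((t \<cdot> p) \<cdot> s)) \<cdot> (u \<cdot> v)"
    by (rule rotate)
  also have "\<dots> = (s \<cdot> (q \<cdot> (t \<cdot> p))) \<cdot> (u \<cdot> v)"
    by (simp only: rotate[of q "t \<cdot> p" s])
  also have "\<dots> = (s \<cdot> (t \<cdot> (p \<cdot> q))) \<cdot> (u \<cdot> v)"
    by (simp only: cyclic[of q t p])
  also have "\<dots> = ((p \<cdot> q) \<cdot> (s \<cdot> t)) \<cdot> (u \<cdot> v)"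
    by (simp only: rotate[of s t "p \<cdot> q"])
  finally show ?thesis .
qed

lemma commute_if_every_element_is_product:
  assumes product: "\<And>z. \<exists>x y. z = x \<cdot> y"
  shows "x \<cdot> y = y \<cdot> x"
proof -
  obtain u v where y: "y = u \<cdot> v"
    using product by blast
  obtain a b where x: "x = a \<cdot> b"
    using product by blast
  obtain p q s t where "a = p \<cdot> q" and "b = s \<cdot> t"
    using product by meson
  then show ?thesis
    unfolding x y by (simp only: product_commutes_with_product_of_products)
qed

end

theorem lemma4p20:
  fixes meet :: "'b \<Rightarrow> 'b \<Rightarrow> 'b" and cmp :: "'b \<Rightarrow> 'b"
  assumes A1: "\<And>x y z. meet x (meet y z) = meet y (meet z x)"
    and A2: "\<And>x y. x = meet (cmp (meet (cmp x) y)) (cmp (meet (cmp x) (cmp y)))"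
  shows "\<forall>x y. meet x y = meet y x"
proof -
  interpret cyclic_magma meet
    using A1 by unfold_locales
  have "\<exists>a b. z = meet a b" for z
    using A2 by blast
  then show ?thesis
    using commute_if_every_element_is_product by blast
qed

end
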